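(* Let $G$ be a transient network and let $A$ be a set of vertices for which there exist $\varepsilon>0$ and infinitely many pairwise disjoint sets $A_1,A_2,\ldots\subseteq A$ with $\operatorname{Cap}(A_i)\ge\varepsilon$ for every $i\ge1$. Then $\operatorname{Cap}(A)=\infty$.
   Context: A network is a connected locally finite graph $G=(V,E)$ with conductances $c:E\to(0,\infty)$; its random walk moves along an incident edge chosen with probability proportional to conductance, and $G$ is transient if this walk is transient. With $c(v)=\sum_{e^-=v}c(e)$ and $\tau_A^+$ the first return time to $A$, the capacity of a finite set $A$ is $\operatorname{Cap}(A)=\sum_{v\in A}c(v)\mathbf P_v(\tau_A^+=\infty)$, and for infinite $A$ it is $\sup\{\operatorname{Cap}(A'):A'\subseteq A\text{ finite}\}$. *)

theory Defs
  imports "HOL-Analysis.Analysis"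
begin

text \<open>A network on vertex set V is given by a symmetric conductance function
  c :: 'v => 'v => real; the edges are the pairs {x,y} with c x y > 0.\<close>

definition nbrs :: "('v \<Rightarrow> 'v \<Rightarrow> real) \<Rightarrow> 'v \<Rightarrow> 'v set" where
  "nbrs c x = {y. c x y > 0}"

definition network :: "'v set \<Rightarrow> ('v \<Rightarrow> 'v \<Rightarrow> real) \<Rightarrow> bool" where
  "network V c \<longleftrightarrow>
     V \<noteq> {} \<and>
     (\<forall>x y. c x y = c y x) \<and>
     (\<forall>x y. c x y \<ge> 0) \<and>
     (\<forall>x y. c x y > 0 \<longrightarrow> x \<in> V \<and> y \<in> V) \<and>
     (\<forall>x\<in>V. finite (nbrs c x)) \<and>
     (\<forall>x\<in>V. \<forall>y\<in>V. (x, y) \<in> {(a, b). c a b > 0}\<^sup>*)"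

definition cond :: "('v \<Rightarrow> 'v \<Rightarrow> real) \<Rightarrow> 'v \<Rightarrow> real" where
  "cond c x = (\<Sum>y\<in>nbrs c x. c x y)"

definition trans_prob :: "('v \<Rightarrow> 'v \<Rightarrow> real) \<Rightarrow> 'v \<Rightarrow> 'v \<Rightarrow> real" where
  "trans_prob c x y = c x y / cond c x"

text \<open>no_return c A n x = P_x(the walk does not visit A at any of the times 1..n),
  i.e. P_x(tau_A^+ > n), computed from the one-step transition probabilities.\<close>
primrec no_return :: "('v \<Rightarrow> 'v \<Rightarrow> real) \<Rightarrow> 'v set \<Rightarrow> nat \<Rightarrow> 'v \<Rightarrow> real" where
  "no_return c A 0 x = 1"
| "no_return c A (Suc n) x =
     (\<Sum>y\<in>nbrs c x. trans_prob c x y * (if y \<in> A then 0 else no_return c A n y))"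

text \<open>P_x(tau_A^+ = infinity) = lim_n P_x(tau_A^+ > n) (a decreasing limit).\<close>
definition escape_prob :: "('v \<Rightarrow> 'v \<Rightarrow> real) \<Rightarrow> 'v set \<Rightarrow> 'v \<Rightarrow> real" where
  "escape_prob c A x = (INF n. no_return c A n x)"

definition transient :: "'v set \<Rightarrow> ('v \<Rightarrow> 'v \<Rightarrow> real) \<Rightarrow> bool" where
  "transient V c \<longleftrightarrow> (\<forall>v\<in>V. escape_prob c {v} v > 0)"

definition cap_fin :: "('v \<Rightarrow> 'v \<Rightarrow> real) \<Rightarrow> 'v set \<Rightarrow> real" where
  "cap_fin c A = (\<Sum>v\<in>A. cond c v * escape_prob c A v)"

definition Cap :: "('v \<Rightarrow> 'v \<Rightarrow> real) \<Rightarrow> 'v set \<Rightarrow> ereal" where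
  "Cap c A = (if finite A then ereal (cap_fin c A)
              else (SUP A'\<in>{A'. A' \<subseteq> A \<and> finite A'}. ereal (cap_fin c A')))"

end

theory Submission
  imports Defs
begin

text \<open>Capacity is almost additive for far-apart sets: for finite B and \<eta> > 0 there is a finite W0
  such that Cap(B \<union> C) \<ge> Cap B + Cap C - 2 sqrt(\<eta> (Cap C + \<eta>)) - \<eta> for every finite C disjoint
  from W0. To see this, kill the walk outside a large finite region W; the resulting capacities
  converge to the true ones as W grows. Inside W the equilibrium potentials h_B, h_C, h_{B \<union> C}
  are compared through the Dirichlet energy: Cauchy-Schwarz gives
  Cap_W(B \<union> C) \<ge> Cap_W B + Cap_W C - 2M, where M is the mutual energy of h_B and h_C, and
  M^2 \<le> (Cap_W0 B - Cap_W B) Cap_W C, which is small once W contains W0.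
  Since a vertex lies in at most one A_i, some A_i avoids any given finite set, so finite pieces of
  capacity > \<epsilon>/2 can be added one at a time, each adding at least \<epsilon>/8.\<close>

lemma sq_le_mult_imp_diff_le:
  fixes a b l X :: real
  assumes "(a + b)\<^sup>2 \<le> l * (a + b + 2 * X)" "l \<ge> 0" "X \<ge> 0"
  shows "a + b - 2 * X \<le> l"
proof (cases "a + b - 2 * X \<le> 0")
  case False
  have "(a + b - 2 * X) * (a + b + 2 * X) = (a + b)\<^sup>2 - 4 * X\<^sup>2"
    by (simp add: power2_eq_square algebra_simps)
  also have "\<dots> \<le> l * (a + b + 2 * X)"
    using assms(1) zero_le_power2[of X] by linarith
  finally have "(a + b - 2 * X) * (a + b + 2 * X) \<le> l * (a + b + 2 * X)" .
  moreover have "0 < a + b + 2 * X"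
    using False assms(3) by linarith
  ultimately show ?thesis
    by (rule mult_right_le_imp_le)
next
  case True
  then show ?thesis using assms(2) by linarith
qed

lemma sub_sqrt_error_ge_quarter:
  fixes \<delta> b :: real
  assumes "\<delta> > 0" "\<delta> \<le> b"
  shows "\<delta> / 4 \<le> b - 2 * sqrt (\<delta> / 32 * (b + \<delta> / 32)) - \<delta> / 32"
proof -
  have "\<delta> * b \<le> b * b" "\<delta> * \<delta> \<le> b * b"
    using assms by (auto intro!: mult_right_mono mult_mono)
  moreover have "\<delta> / 32 * (b + \<delta> / 32) = \<delta> * b / 32 + \<delta> * \<delta> / 1024" "(b / 4)\<^sup>2 = b * b / 16"
    by (simp_all add: field_simps power2_eq_square)
  ultimately have "\<delta> / 32 * (b + \<delta> / 32) \<le> (b / 4)\<^sup>2"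
    using zero_le_square[of b] by linarith
  then have "sqrt (\<delta> / 32 * (b + \<delta> / 32)) \<le> sqrt ((b / 4)\<^sup>2)"
    by (rule real_sqrt_le_mono)
  also have "\<dots> = b / 4"
    using assms by simp
  finally show ?thesis using assms by linarith
qed

lemma disjoint_family_on_avoids_finite:
  assumes "finite W" "infinite I" "disjoint_family_on F I"
  obtains i where "i \<in> I" "F i \<inter> W = {}"
proof -
  have "finite {i \<in> I. w \<in> F i}" for w
  proof (cases "\<exists>i\<in>I. w \<in> F i")
    case True
    then obtain i where "i \<in> I" "w \<in> F i" by blast
    with assms(3) have "{i \<in> I. w \<in> F i} \<subseteq> {i}"
      unfolding disjoint_family_on_def by blast
    then show ?thesis using finite_subset by blast
  next
    case False
    then have "{i \<in> I. w \<in> F i} = {}" by blast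
    then show ?thesis by (metis finite.emptyI)
  qed
  with assms(1) have "finite (\<Union>w\<in>W. {i \<in> I. w \<in> F i})" by blast
  then have "infinite (I - (\<Union>w\<in>W. {i \<in> I. w \<in> F i}))"
    using assms(2) by (rule Diff_infinite_finite)
  then obtain i where "i \<in> I - (\<Union>w\<in>W. {i \<in> I. w \<in> F i})"
    using infinite_imp_nonempty by blast
  then show ?thesis using that by blast
qed

text \<open>Every edge is counted twice, whence the factors 2 below.\<close>

definition energy :: "('v \<Rightarrow> 'v \<Rightarrow> real) \<Rightarrow> 'v set \<Rightarrow> ('v \<Rightarrow> real) \<Rightarrow> ('v \<Rightarrow> real) \<Rightarrow> real" where
  "energy c S f g = (\<Sum>x\<in>S. \<Sum>y\<in>S. c x y * (f x - f y) * (g x - g y))"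

lemma energy_sym: "energy c S f g = energy c S g f"
  unfolding energy_def by (intro sum.cong refl) (simp add: mult_ac)

lemma energy_add_left: "energy c S (\<lambda>x. f x + g x) h = energy c S f h + energy c S g h"
  unfolding energy_def by (simp add: sum.distrib[symmetric] algebra_simps)

lemma energy_diff_left: "energy c S (\<lambda>x. f x - g x) h = energy c S f h - energy c S g h"
  unfolding energy_def by (simp add: sum_subtractf[symmetric] algebra_simps)

lemma energy_add_right: "energy c S h (\<lambda>x. f x + g x) = energy c S h f + energy c S h g"
  using energy_add_left energy_sym by metis

lemma energy_diff_right: "energy c S h (\<lambda>x. f x - g x) = energy c S h f - energy c S h g"
  using energy_diff_left energy_sym by metis

lemma energy_Cauchy_Schwarz:
  fixes c :: "'v \<Rightarrow> 'v \<Rightarrow> real"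
  assumes "\<And>x y. c x y \<ge> 0"
  shows "(energy c S f g)\<^sup>2 \<le> energy c S f f * energy c S g g"
proof -
  define u where "u = (\<lambda>f (x, y). sqrt (c x y) * (f x - f y))"
  have "energy c S f g = (\<Sum>p\<in>S \<times> S. u f p * u g p)" for f g
    unfolding energy_def sum.cartesian_product
  proof (intro sum.cong refl)
    fix p assume "p \<in> S \<times> S"
    obtain x y where p: "p = (x, y)" by fastforce
    have "sqrt (c x y) * sqrt (c x y) = c x y" using assms[of x y] by simp
    then show "(case p of (x, y) \<Rightarrow> c x y * (f x - f y) * (g x - g y)) = u f p * u g p"
      unfolding p u_def by (simp add: algebra_simps)
  qed
  from this[of f f] this[of g g] this[of f g] show ?thesis
    using Cauchy_Schwarz_ineq_sum[of "u f" "u g" "S \<times> S"] by (simp add: power2_eq_square)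
qed

lemma energy_Green:
  assumes "\<And>x y. c x y = c y x"
  shows "energy c S f g = 2 * (\<Sum>x\<in>S. f x * (\<Sum>y\<in>S. c x y * (g x - g y)))"
proof -
  have "energy c S f g =
      (\<Sum>x\<in>S. \<Sum>y\<in>S. c x y * f x * (g x - g y)) - (\<Sum>x\<in>S. \<Sum>y\<in>S. c x y * f y * (g x - g y))"
    unfolding energy_def by (simp add: sum_subtractf[symmetric] algebra_simps)
  also have "(\<Sum>x\<in>S. \<Sum>y\<in>S. c x y * f y * (g x - g y)) = (\<Sum>y\<in>S. \<Sum>x\<in>S. c x y * f y * (g x - g y))"
    by (rule sum.swap)
  also have "\<dots> = - (\<Sum>x\<in>S. \<Sum>y\<in>S. c x y * f x * (g x - g y))"
    by (simp add: sum_negf[symmetric] assms algebra_simps)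
  finally show ?thesis by (simp add: sum_distrib_left mult_ac)
qed

text \<open>hit_prob_n c W K n x is the probability that the walk from x visits K within n steps, the
  walk being killed at vertices outside W \<union> K; its limit hit_prob c W K is the equilibrium
  potential of K relative to W.\<close>

primrec hit_prob_n :: "('v \<Rightarrow> 'v \<Rightarrow> real) \<Rightarrow> 'v set \<Rightarrow> 'v set \<Rightarrow> nat \<Rightarrow> 'v \<Rightarrow> real" where
  "hit_prob_n c W K 0 x = (if x \<in> K then 1 else 0)"
| "hit_prob_n c W K (Suc n) x =
     (if x \<in> K then 1 else if x \<notin> W then 0
      else (\<Sum>y\<in>nbrs c x. trans_prob c x y * hit_prob_n c W K n y))"

definition hit_prob :: "('v \<Rightarrow> 'v \<Rightarrow> real) \<Rightarrow> 'v set \<Rightarrow> 'v set \<Rightarrow> 'v \<Rightarrow> real" where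
  "hit_prob c W K x = (SUP n. hit_prob_n c W K n x)"

definition eq_measure :: "('v \<Rightarrow> 'v \<Rightarrow> real) \<Rightarrow> 'v set \<Rightarrow> 'v set \<Rightarrow> 'v \<Rightarrow> real" where
  "eq_measure c W K x = (\<Sum>y\<in>nbrs c x. c x y * (1 - hit_prob c W K y))"

definition cap_within :: "('v \<Rightarrow> 'v \<Rightarrow> real) \<Rightarrow> 'v set \<Rightarrow> 'v set \<Rightarrow> real" where
  "cap_within c W K = (\<Sum>x\<in>K. eq_measure c W K x)"

text \<open>Half the energy pairing of the potentials of B and C (see energy_hit_prob).\<close>

definition mutual_energy :: "('v \<Rightarrow> 'v \<Rightarrow> real) \<Rightarrow> 'v set \<Rightarrow> 'v set \<Rightarrow> 'v set \<Rightarrow> real" where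
  "mutual_energy c W B C = (\<Sum>x\<in>C. hit_prob c W B x * eq_measure c W C x)"

primrec reachable_in :: "('v \<Rightarrow> 'v \<Rightarrow> real) \<Rightarrow> nat \<Rightarrow> 'v \<Rightarrow> 'v set" where
  "reachable_in c 0 x = {x}"
| "reachable_in c (Suc n) x = insert x (\<Union>y\<in>nbrs c x. reachable_in c n y)"

text \<open>Transience is used only through this consequence, which makes the transition probabilities
  out of every vertex sum to 1.\<close>

lemma transient_nbrs_nonempty:
  assumes "transient V c" "x \<in> V"
  shows "nbrs c x \<noteq> {}"
proof
  assume no_nbrs: "nbrs c x = {}"
  then have "no_return c {x} n x \<ge> 0" for n
    by (cases n) auto
  then have "bdd_below (range (\<lambda>n. no_return c {x} n x))"
    by (intro bdd_belowI[of _ 0]) auto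
  then have "escape_prob c {x} x \<le> no_return c {x} (Suc 0) x"
    unfolding escape_prob_def by (rule cINF_lower) simp
  with no_nbrs assms show False
    by (auto simp: transient_def)
qed

lemma Cap_gt_imp_finite_subset:
  assumes "ereal r < Cap c A"
  obtains F where "finite F" "F \<subseteq> A" "r < cap_fin c F"
proof (cases "finite A")
  case True
  with assms that show ?thesis by (auto simp: Cap_def)
next
  case False
  with assms have "ereal r < (SUP F\<in>{F. F \<subseteq> A \<and> finite F}. ereal (cap_fin c F))"
    by (simp add: Cap_def)
  then obtain F where "F \<subseteq> A" "finite F" "r < cap_fin c F"
    unfolding less_SUP_iff by auto
  with that show ?thesis by blast
qed

locale walk_network =
  fixes V :: "'v set" and c :: "'v \<Rightarrow> 'v \<Rightarrow> real"
  assumes network: "network V c"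
    and nbrs_nonempty: "x \<in> V \<Longrightarrow> nbrs c x \<noteq> {}"
begin

lemma c_nonneg: "c x y \<ge> 0"
  using network unfolding network_def by blast

lemma c_sym: "c x y = c y x"
  using network unfolding network_def by blast

lemma nbrs_in_V: "y \<in> nbrs c x \<Longrightarrow> x \<in> V \<and> y \<in> V"
  using network unfolding network_def nbrs_def by blast

lemma nbrs_outside_V: "x \<notin> V \<Longrightarrow> nbrs c x = {}"
  using nbrs_in_V by blast

lemma finite_nbrs: "finite (nbrs c x)"
  using network nbrs_outside_V[of x] unfolding network_def by (cases "x \<in> V") auto

lemma c_eq_0_if_not_nbr: "y \<notin> nbrs c x \<Longrightarrow> c x y = 0"
  using c_nonneg[of x y] unfolding nbrs_def by force

lemma cond_nonneg: "cond c x \<ge> 0"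
  unfolding cond_def by (intro sum_nonneg) (simp add: c_nonneg)

lemma cond_pos:
  assumes "x \<in> V"
  shows "cond c x > 0"
proof -
  obtain y where "y \<in> nbrs c x" using nbrs_nonempty[OF assms] by blast
  then show ?thesis
    unfolding cond_def by (intro sum_pos2[OF finite_nbrs]) (auto simp: nbrs_def c_nonneg)
qed

lemma trans_prob_nonneg: "trans_prob c x y \<ge> 0"
  unfolding trans_prob_def by (simp add: c_nonneg cond_nonneg)

lemma sum_trans_prob: "x \<in> V \<Longrightarrow> (\<Sum>y\<in>nbrs c x. trans_prob c x y) = 1"
  using cond_pos[of x] unfolding trans_prob_def cond_def by (simp add: sum_divide_distrib[symmetric])

lemma sum_trans_prob_le_1: "(\<Sum>y\<in>nbrs c x. trans_prob c x y) \<le> 1"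
  by (cases "x \<in> V") (simp_all add: sum_trans_prob nbrs_outside_V)

lemma cond_mult_trans_prob: "cond c x * trans_prob c x y = c x y"
proof (cases "x \<in> V")
  case True
  then show ?thesis using cond_pos[of x] unfolding trans_prob_def by simp
next
  case False
  then show ?thesis using c_eq_0_if_not_nbr nbrs_outside_V unfolding trans_prob_def by simp
qed

lemma no_return_nonneg: "no_return c A n x \<ge> 0"
  by (induction n arbitrary: x) (auto intro!: sum_nonneg mult_nonneg_nonneg simp: trans_prob_nonneg)

lemma bdd_below_no_return: "bdd_below (range (\<lambda>n. no_return c A n x))"
  by (rule bdd_belowI[of _ 0]) (auto simp: no_return_nonneg)

lemma escape_prob_nonneg: "escape_prob c A x \<ge> 0"
  unfolding escape_prob_def by (rule cINF_greatest) (auto simp: no_return_nonneg)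

lemma escape_prob_le_1: "escape_prob c A x \<le> 1"
proof -
  have "escape_prob c A x \<le> no_return c A 0 x"
    unfolding escape_prob_def by (rule cINF_lower[OF bdd_below_no_return]) simp
  then show ?thesis by simp
qed

lemma cap_fin_nonneg: "cap_fin c K \<ge> 0"
  unfolding cap_fin_def by (intro sum_nonneg mult_nonneg_nonneg cond_nonneg escape_prob_nonneg)

lemma cap_fin_le_sum_cond: "cap_fin c K \<le> (\<Sum>v\<in>K. cond c v)"
  unfolding cap_fin_def
  by (intro sum_mono mult_left_le escape_prob_le_1 cond_nonneg)

lemma hit_prob_n_in: "x \<in> K \<Longrightarrow> hit_prob_n c W K n x = 1"
  by (cases n) auto

lemma hit_prob_n_bounds: "0 \<le> hit_prob_n c W K n x \<and> hit_prob_n c W K n x \<le> 1"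
proof (induction n arbitrary: x)
  case (Suc n)
  have "(\<Sum>y\<in>nbrs c x. trans_prob c x y * hit_prob_n c W K n y) \<le> (\<Sum>y\<in>nbrs c x. trans_prob c x y)"
    by (intro sum_mono) (simp add: Suc trans_prob_nonneg mult_left_le)
  moreover have "0 \<le> (\<Sum>y\<in>nbrs c x. trans_prob c x y * hit_prob_n c W K n y)"
    by (intro sum_nonneg) (simp add: Suc trans_prob_nonneg)
  ultimately show ?case
    using sum_trans_prob_le_1[of x] by auto
qed simp

lemma hit_prob_n_Suc_mono: "hit_prob_n c W K n x \<le> hit_prob_n c W K (Suc n) x"
proof (induction n arbitrary: x)
  case 0
  show ?case using hit_prob_n_bounds[of W K "Suc 0" x] by (cases "x \<in> K") auto
next
  case (Suc n)
  have "(\<Sum>y\<in>nbrs c x. trans_prob c x y * hit_prob_n c W K n y)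
      \<le> (\<Sum>y\<in>nbrs c x. trans_prob c x y * hit_prob_n c W K (Suc n) y)"
    by (intro sum_mono mult_left_mono Suc trans_prob_nonneg)
  then show ?case by (simp only: hit_prob_n.simps) simp
qed

lemma hit_prob_n_mono_W:
  assumes "W \<subseteq> W'"
  shows "hit_prob_n c W K n x \<le> hit_prob_n c W' K n x"
proof (induction n arbitrary: x)
  case (Suc n)
  have "(\<Sum>y\<in>nbrs c x. trans_prob c x y * hit_prob_n c W K n y)
      \<le> (\<Sum>y\<in>nbrs c x. trans_prob c x y * hit_prob_n c W' K n y)"
    by (intro sum_mono mult_left_mono Suc trans_prob_nonneg)
  then show ?case
    using assms hit_prob_n_bounds[of W' K "Suc n" x] by auto
qed simp

lemma hit_prob_n_tendsto: "(\<lambda>n. hit_prob_n c W K n x) \<longlonglongrightarrow> hit_prob c W K x"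
  unfolding hit_prob_def
  by (rule LIMSEQ_incseq_SUP) (auto intro!: bdd_aboveI[of _ 1] incseq_SucI hit_prob_n_Suc_mono
      simp: hit_prob_n_bounds)

lemma hit_prob_n_le_hit_prob: "hit_prob_n c W K n x \<le> hit_prob c W K x"
  by (rule incseq_le[OF incseq_SucI hit_prob_n_tendsto]) (rule hit_prob_n_Suc_mono)

lemma hit_prob_bounds: "0 \<le> hit_prob c W K x \<and> hit_prob c W K x \<le> 1"
  using hit_prob_n_le_hit_prob[of W K 0 x] hit_prob_n_bounds[of W K 0 x]
    LIMSEQ_le_const2[OF hit_prob_n_tendsto] hit_prob_n_bounds by fastforce

lemma hit_prob_in: "x \<in> K \<Longrightarrow> hit_prob c W K x = 1"
  unfolding hit_prob_def by (simp add: hit_prob_n_in)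

lemma hit_prob_outside: "x \<notin> W \<Longrightarrow> x \<notin> K \<Longrightarrow> hit_prob c W K x = 0"
proof -
  assume "x \<notin> W" "x \<notin> K"
  then have "hit_prob_n c W K n x = 0" for n by (cases n) auto
  then show ?thesis unfolding hit_prob_def by simp
qed

lemma hit_prob_mono_W: "W \<subseteq> W' \<Longrightarrow> hit_prob c W K x \<le> hit_prob c W' K x"
  by (rule LIMSEQ_le[OF hit_prob_n_tendsto hit_prob_n_tendsto]) (auto intro: hit_prob_n_mono_W)

lemma hit_prob_harmonic:
  assumes "x \<in> W" "x \<notin> K"
  shows "hit_prob c W K x = (\<Sum>y\<in>nbrs c x. trans_prob c x y * hit_prob c W K y)"
proof -
  have "(\<lambda>n. hit_prob_n c W K (Suc n) x) \<longlonglongrightarrow> hit_prob c W K x"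
    using hit_prob_n_tendsto by (rule LIMSEQ_Suc)
  moreover have "(\<lambda>n. hit_prob_n c W K (Suc n) x) \<longlonglongrightarrow> (\<Sum>y\<in>nbrs c x. trans_prob c x y * hit_prob c W K y)"
    using assms by (simp, intro tendsto_sum tendsto_mult tendsto_const hit_prob_n_tendsto)
  ultimately show ?thesis by (rule LIMSEQ_unique)
qed

lemma hit_prob_Laplacian_eq_0:
  assumes "x \<in> W" "x \<notin> K"
  shows "(\<Sum>y\<in>nbrs c x. c x y * (hit_prob c W K x - hit_prob c W K y)) = 0"
proof -
  have "(\<Sum>y\<in>nbrs c x. c x y * hit_prob c W K y)
      = cond c x * (\<Sum>y\<in>nbrs c x. trans_prob c x y * hit_prob c W K y)"
    by (simp add: sum_distrib_left mult.assoc[symmetric] cond_mult_trans_prob)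
  then show ?thesis
    using hit_prob_harmonic[OF assms]
    unfolding right_diff_distrib sum_subtractf sum_distrib_right[symmetric] cond_def by simp
qed

lemma cap_within_antimono: "W \<subseteq> W' \<Longrightarrow> cap_within c W' K \<le> cap_within c W K"
  unfolding cap_within_def eq_measure_def
  by (intro sum_mono mult_left_mono) (auto simp: c_nonneg hit_prob_mono_W)

lemma eq_measure_nonneg: "eq_measure c W K x \<ge> 0"
  unfolding eq_measure_def using hit_prob_bounds
  by (intro sum_nonneg mult_nonneg_nonneg) (auto simp: c_nonneg)

lemma no_return_Suc:
  assumes "v \<in> V"
  shows "no_return c K (Suc n) v = 1 - (\<Sum>y\<in>nbrs c v. trans_prob c v y * hit_prob_n c V K n y)"
proof -
  have "no_return c K n y = 1 - hit_prob_n c V K n y" if "y \<in> V" "y \<notin> K" for n y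
    using that
  proof (induction n arbitrary: y)
    case (Suc n)
    have "no_return c K (Suc n) y = (\<Sum>z\<in>nbrs c y. trans_prob c y z * (1 - hit_prob_n c V K n z))"
      by (auto intro!: sum.cong simp: hit_prob_n_in Suc.IH dest: nbrs_in_V)
    with Suc.prems sum_trans_prob[of y] show ?case
      by (simp add: algebra_simps sum_subtractf)
  qed simp
  then have "no_return c K (Suc n) v = (\<Sum>y\<in>nbrs c v. trans_prob c v y * (1 - hit_prob_n c V K n y))"
    by (auto intro!: sum.cong simp: hit_prob_n_in dest: nbrs_in_V)
  with sum_trans_prob[OF assms] show ?thesis
    by (simp add: algebra_simps sum_subtractf)
qed

lemma escape_prob_eq:
  assumes "v \<in> V"
  shows "escape_prob c K v = 1 - (\<Sum>y\<in>nbrs c v. trans_prob c v y * hit_prob c V K y)"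
proof -
  let ?p = "\<lambda>n. no_return c K n v"
  let ?q = "\<lambda>n. \<Sum>y\<in>nbrs c v. trans_prob c v y * hit_prob_n c V K n y"
  have q_mono: "?q n \<le> ?q (Suc n)" for n
    by (intro sum_mono mult_left_mono hit_prob_n_Suc_mono trans_prob_nonneg)
  have "decseq ?p"
  proof (rule decseq_SucI)
    show "?p (Suc n) \<le> ?p n" for n
    proof (cases n)
      case 0
      have "0 \<le> ?q 0"
        using hit_prob_n_bounds by (intro sum_nonneg mult_nonneg_nonneg trans_prob_nonneg) auto
      with 0 show ?thesis using no_return_Suc[OF assms, of K 0] by simp
    next
      case (Suc m)
      then show ?thesis using q_mono[of m] no_return_Suc[OF assms, of K] by simp
    qed
  qed
  then have "?p \<longlonglongrightarrow> escape_prob c K v"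
    unfolding escape_prob_def by (rule LIMSEQ_decseq_INF[OF bdd_below_no_return])
  moreover have "(\<lambda>n. ?p (Suc n)) \<longlonglongrightarrow> 1 - (\<Sum>y\<in>nbrs c v. trans_prob c v y * hit_prob c V K y)"
    unfolding no_return_Suc[OF assms]
    by (intro tendsto_diff tendsto_sum tendsto_mult tendsto_const hit_prob_n_tendsto)
  ultimately show ?thesis
    using LIMSEQ_Suc LIMSEQ_unique by blast
qed

lemma cap_fin_eq_cap_within:
  assumes "K \<subseteq> V"
  shows "cap_fin c K = cap_within c V K"
  unfolding cap_fin_def cap_within_def
proof (intro sum.cong refl)
  fix v assume "v \<in> K"
  with assms have "v \<in> V" by blast
  have "cond c v * escape_prob c K v
      = cond c v - (\<Sum>y\<in>nbrs c v. cond c v * trans_prob c v y * hit_prob c V K y)"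
    unfolding escape_prob_eq[OF \<open>v \<in> V\<close>] by (simp add: algebra_simps sum_distrib_left)
  also have "\<dots> = eq_measure c V K v"
    unfolding eq_measure_def cond_mult_trans_prob by (simp add: cond_def algebra_simps sum_subtractf)
  finally show "cond c v * escape_prob c K v = eq_measure c V K v" .
qed

lemma finite_reachable_in: "finite (reachable_in c n x)"
  by (induction n arbitrary: x) (auto simp: finite_nbrs)

lemma hit_prob_n_local:
  "reachable_in c n x \<inter> V \<subseteq> W \<Longrightarrow> hit_prob_n c W K n x = hit_prob_n c V K n x"
proof (induction n arbitrary: x)
  case (Suc n)
  show ?case
  proof (cases "x \<in> V")
    case True
    with Suc.prems have "x \<in> W" by auto
    moreover have "hit_prob_n c W K n y = hit_prob_n c V K n y" if "y \<in> nbrs c x" for y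
      using Suc.prems that by (intro Suc.IH) auto
    ultimately show ?thesis using True by simp
  qed (simp add: nbrs_outside_V)
qed simp

lemma hit_prob_approx:
  assumes "finite Y" "\<delta> > 0"
  obtains W0 where "finite W0" "W0 \<subseteq> V"
    "\<And>W y. W0 \<subseteq> W \<Longrightarrow> y \<in> Y \<Longrightarrow> hit_prob c V K y - \<delta> \<le> hit_prob c W K y"
proof -
  have "\<forall>y\<in>Y. eventually (\<lambda>n. hit_prob c V K y - \<delta> < hit_prob_n c V K n y) sequentially"
    using assms(2) by (intro ballI order_tendstoD(1)[OF hit_prob_n_tendsto]) auto
  then have "eventually (\<lambda>n. \<forall>y\<in>Y. hit_prob c V K y - \<delta> < hit_prob_n c V K n y) sequentially"
    using assms(1) by (simp add: eventually_ball_finite)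
  then obtain n where n: "\<And>y. y \<in> Y \<Longrightarrow> hit_prob c V K y - \<delta> < hit_prob_n c V K n y"
    unfolding eventually_sequentially by blast
  show ?thesis
  proof
    show "finite ((\<Union>y\<in>Y. reachable_in c n y) \<inter> V)"
      using assms(1) by (auto simp: finite_reachable_in)
    show "(\<Union>y\<in>Y. reachable_in c n y) \<inter> V \<subseteq> V" by blast
    fix W y assume "(\<Union>y\<in>Y. reachable_in c n y) \<inter> V \<subseteq> W" "y \<in> Y"
    then have "hit_prob_n c W K n y = hit_prob_n c V K n y"
      by (intro hit_prob_n_local) auto
    with n[OF \<open>y \<in> Y\<close>] hit_prob_n_le_hit_prob[of W K n y]
    show "hit_prob c V K y - \<delta> \<le> hit_prob c W K y" by linarith
  qed
qed

lemma cap_within_approx: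
  assumes "K \<subseteq> V" "finite K" "\<eta> > 0"
  obtains W0 where "finite W0" "W0 \<subseteq> V" "K \<subseteq> W0"
    "\<And>W. W0 \<subseteq> W \<Longrightarrow> cap_within c W K \<le> cap_fin c K + \<eta>"
proof -
  define S where "S = (\<Sum>v\<in>K. cond c v)"
  have "S \<ge> 0" unfolding S_def by (intro sum_nonneg cond_nonneg)
  define \<delta> where "\<delta> = \<eta> / (S + 1)"
  have "\<delta> > 0" unfolding \<delta>_def using \<open>S \<ge> 0\<close> assms(3) by simp
  have "\<delta> * S \<le> \<eta>"
    unfolding \<delta>_def using \<open>S \<ge> 0\<close> assms(3) by (simp add: field_simps)
  obtain W1 where W1: "finite W1" "W1 \<subseteq> V"
    "\<And>W y. W1 \<subseteq> W \<Longrightarrow> y \<in> (\<Union>v\<in>K. nbrs c v) \<Longrightarrow> hit_prob c V K y - \<delta> \<le> hit_prob c W K y"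
    using hit_prob_approx[of "\<Union>v\<in>K. nbrs c v" \<delta>] assms(2) \<open>\<delta> > 0\<close> by (auto simp: finite_nbrs)
  show ?thesis
  proof
    show "finite (W1 \<union> K)" "W1 \<union> K \<subseteq> V" "K \<subseteq> W1 \<union> K"
      using W1 assms by auto
    fix W assume "W1 \<union> K \<subseteq> W"
    have "cap_within c W K - cap_within c V K
        = (\<Sum>v\<in>K. \<Sum>y\<in>nbrs c v. c v y * (hit_prob c V K y - hit_prob c W K y))"
      unfolding cap_within_def eq_measure_def by (simp add: sum_subtractf[symmetric] algebra_simps)
    also have "\<dots> \<le> (\<Sum>v\<in>K. \<Sum>y\<in>nbrs c v. c v y * \<delta>)"
      using W1(3) \<open>W1 \<union> K \<subseteq> W\<close>
      by (intro sum_mono mult_left_mono) (auto simp: c_nonneg algebra_simps)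
    also have "\<dots> = \<delta> * S"
      unfolding S_def cond_def by (simp add: sum_distrib_left sum_distrib_right mult.commute)
    finally show "cap_within c W K \<le> cap_fin c K + \<eta>"
      using \<open>\<delta> * S \<le> \<eta>\<close> cap_fin_eq_cap_within[OF assms(1)] by simp
  qed
qed

lemma energy_hit_prob:
  assumes "finite S" "W \<subseteq> S" "\<And>x. x \<in> W \<Longrightarrow> nbrs c x \<subseteq> S" "K \<subseteq> W"
    and "\<And>x. x \<notin> W \<Longrightarrow> f x = 0"
  shows "energy c S f (hit_prob c W K) = 2 * (\<Sum>x\<in>K. f x * eq_measure c W K x)"
proof -
  let ?h = "hit_prob c W K"
  have "finite W" using assms(1,2) finite_subset by blast
  have "energy c S f ?h = 2 * (\<Sum>x\<in>S. f x * (\<Sum>y\<in>S. c x y * (?h x - ?h y)))"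
    using c_sym by (rule energy_Green)
  also have "(\<Sum>x\<in>S. f x * (\<Sum>y\<in>S. c x y * (?h x - ?h y)))
      = (\<Sum>x\<in>W. f x * (\<Sum>y\<in>S. c x y * (?h x - ?h y)))"
    using assms(1,2,5) by (intro sum.mono_neutral_right) auto
  also have "\<dots> = (\<Sum>x\<in>W. f x * (\<Sum>y\<in>nbrs c x. c x y * (?h x - ?h y)))"
    using assms(1,3) by (intro sum.cong refl arg_cong2[where f = "(*)"] sum.mono_neutral_right)
      (auto simp: c_eq_0_if_not_nbr)
  also have "\<dots> = (\<Sum>x\<in>K. f x * (\<Sum>y\<in>nbrs c x. c x y * (?h x - ?h y)))"
    using \<open>finite W\<close> assms(4) by (intro sum.mono_neutral_right) (auto simp: hit_prob_Laplacian_eq_0)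
  also have "\<dots> = (\<Sum>x\<in>K. f x * eq_measure c W K x)"
    unfolding eq_measure_def by (intro sum.cong refl) (simp add: hit_prob_in)
  finally show ?thesis .
qed

lemma energy_hit_prob_eq_cap_within:
  assumes "finite S" "W \<subseteq> S" "\<And>x. x \<in> W \<Longrightarrow> nbrs c x \<subseteq> S" "K \<subseteq> W"
    and "\<And>x. x \<notin> W \<Longrightarrow> f x = 0" "\<And>x. x \<in> K \<Longrightarrow> f x = 1"
  shows "energy c S f (hit_prob c W K) = 2 * cap_within c W K"
proof -
  have "(\<Sum>x\<in>K. f x * eq_measure c W K x) = cap_within c W K"
    unfolding cap_within_def using assms(6) by (intro sum.cong) auto
  with energy_hit_prob[OF assms(1-5)] show ?thesis by simp
qed

lemma energy_hit_prob_diff: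
  assumes "finite S" "W \<subseteq> S" "\<And>x. x \<in> W \<Longrightarrow> nbrs c x \<subseteq> S" "W0 \<subseteq> W" "B \<subseteq> W0"
  defines "D \<equiv> \<lambda>x. hit_prob c W B x - hit_prob c W0 B x"
  shows "energy c S D D = 2 * (cap_within c W0 B - cap_within c W B)"
proof -
  define hB where "hB = hit_prob c W B"
  define h0 where "h0 = hit_prob c W0 B"
  have h0_out: "h0 x = 0" if "x \<notin> W0" for x
    using assms(5) that unfolding h0_def by (auto intro: hit_prob_outside)
  have "energy c S hB hB = 2 * cap_within c W B"
    using assms(4,5) unfolding hB_def
    by (intro energy_hit_prob_eq_cap_within assms(1-3)) (auto simp: hit_prob_in intro: hit_prob_outside)
  moreover have "energy c S h0 hB = 2 * cap_within c W B"
    using assms(4,5) h0_out unfolding hB_def h0_def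
    by (intro energy_hit_prob_eq_cap_within assms(1-3)) (auto simp: hit_prob_in)
  moreover have "energy c S h0 h0 = 2 * cap_within c W0 B"
    using assms(2-5) h0_out unfolding h0_def
    by (intro energy_hit_prob_eq_cap_within assms(1)) (auto simp: hit_prob_in)
  ultimately show ?thesis
    unfolding D_def hB_def[symmetric] h0_def[symmetric] energy_diff_left energy_diff_right
    by (simp add: energy_sym[of c S hB h0])
qed

text \<open>Cauchy-Schwarz for h_B - h_B^W0 and h_C: the potential h_B^W0 of B relative to W0 vanishes
  on C, so it does not contribute to the pairing.\<close>

lemma mutual_energy_sq_le:
  assumes "finite W" "W0 \<subseteq> W" "B \<subseteq> W0" "C \<subseteq> W" "C \<inter> W0 = {}"
  shows "(mutual_energy c W B C)\<^sup>2 \<le> (cap_within c W0 B - cap_within c W B) * cap_within c W C"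
proof -
  define S where "S = W \<union> (\<Union>x\<in>W. nbrs c x)"
  have S: "finite S" "W \<subseteq> S" "\<And>x. x \<in> W \<Longrightarrow> nbrs c x \<subseteq> S"
    unfolding S_def using assms(1) by (auto simp: finite_nbrs)
  define hB where "hB = hit_prob c W B"
  define hC where "hC = hit_prob c W C"
  define h0 where "h0 = hit_prob c W0 B"
  define D where "D = (\<lambda>x. hB x - h0 x)"
  have BC: "energy c S hB hC = 2 * mutual_energy c W B C"
    using assms(2-4) unfolding hC_def mutual_energy_def hB_def
    by (intro energy_hit_prob S) (auto intro: hit_prob_outside)
  have h0_out: "h0 x = 0" if "x \<notin> W0" for x
    using assms(3) that unfolding h0_def by (auto intro: hit_prob_outside)
  have "energy c S h0 hC = 2 * (\<Sum>x\<in>C. h0 x * eq_measure c W C x)"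
    unfolding hC_def using assms(2) h0_out by (intro energy_hit_prob S assms(4)) auto
  also have "\<dots> = 0"
    using assms(5) h0_out by (simp add: sum.neutral disjoint_iff)
  finally have "energy c S h0 hC = 0" .
  with BC have "energy c S D hC = 2 * mutual_energy c W B C"
    unfolding D_def energy_diff_left by simp
  moreover have "energy c S D D = 2 * (cap_within c W0 B - cap_within c W B)"
    unfolding D_def hB_def h0_def using S assms(2,3) by (rule energy_hit_prob_diff)
  moreover have "energy c S hC hC = 2 * cap_within c W C"
    using assms(4) unfolding hC_def
    by (intro energy_hit_prob_eq_cap_within S) (auto simp: hit_prob_in intro: hit_prob_outside)
  moreover have "(energy c S D hC)\<^sup>2 \<le> energy c S D D * energy c S hC hC"
    using c_nonneg by (rule energy_Cauchy_Schwarz)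
  ultimately have "(2 * mutual_energy c W B C)\<^sup>2
      \<le> 2 * (cap_within c W0 B - cap_within c W B) * (2 * cap_within c W C)"
    by simp
  then show ?thesis
    by (simp add: power_mult_distrib right_diff_distrib mult.commute)
qed

text \<open>Cauchy-Schwarz for h_{B \<union> C} and h_B + h_C.\<close>

lemma cap_within_union_ge:
  assumes "finite W" "B \<subseteq> W" "C \<subseteq> W"
  shows "cap_within c W B + cap_within c W C - 2 * mutual_energy c W B C \<le> cap_within c W (B \<union> C)"
proof -
  define S where "S = W \<union> (\<Union>x\<in>W. nbrs c x)"
  have S: "finite S" "W \<subseteq> S" "\<And>x. x \<in> W \<Longrightarrow> nbrs c x \<subseteq> S"
    unfolding S_def using assms(1) by (auto simp: finite_nbrs)
  define hB where "hB = hit_prob c W B"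
  define hC where "hC = hit_prob c W C"
  define hL where "hL = hit_prob c W (B \<union> C)"
  define g where "g = (\<lambda>x. hB x + hC x)"
  let ?a = "cap_within c W B" and ?b = "cap_within c W C" and ?l = "cap_within c W (B \<union> C)"
    and ?X = "mutual_energy c W B C"
  have out: "hB x = 0" "hC x = 0" "hL x = 0" if "x \<notin> W" for x
    using assms that unfolding hB_def hC_def hL_def by (auto intro: hit_prob_outside)
  have "energy c S hB hB = 2 * ?a" "energy c S hL hB = 2 * ?a"
    using assms out unfolding hB_def hL_def
    by (auto intro!: energy_hit_prob_eq_cap_within S simp: hit_prob_in)
  moreover have "energy c S hC hC = 2 * ?b" "energy c S hL hC = 2 * ?b"
    using assms out unfolding hC_def hL_def
    by (auto intro!: energy_hit_prob_eq_cap_within S simp: hit_prob_in)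
  moreover have "energy c S hL hL = 2 * ?l"
    using assms out unfolding hL_def
    by (auto intro!: energy_hit_prob_eq_cap_within S simp: hit_prob_in)
  moreover have "energy c S hB hC = 2 * ?X"
    using assms out unfolding hB_def hC_def mutual_energy_def by (intro energy_hit_prob S) auto
  moreover have "(energy c S hL g)\<^sup>2 \<le> energy c S hL hL * energy c S g g"
    using c_nonneg by (rule energy_Cauchy_Schwarz)
  ultimately have "(2 * ?a + 2 * ?b)\<^sup>2 \<le> 2 * ?l * (2 * ?a + 2 * ?b + 4 * ?X)"
    unfolding g_def energy_add_left energy_add_right by (simp add: energy_sym[of c S hC hB] algebra_simps)
  then have "(?a + ?b)\<^sup>2 \<le> ?l * (?a + ?b + 2 * ?X)"
    by (simp add: power2_eq_square algebra_simps)
  moreover have "?X \<ge> 0"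
    unfolding mutual_energy_def using hit_prob_bounds
    by (intro sum_nonneg mult_nonneg_nonneg eq_measure_nonneg) auto
  ultimately show ?thesis
    by (intro sq_le_mult_imp_diff_le) (auto simp: cap_within_def intro!: sum_nonneg eq_measure_nonneg)
qed

lemma cap_fin_union_far:
  assumes "B \<subseteq> V" "finite B" "\<eta> > 0"
  obtains W0 where "finite W0" "W0 \<subseteq> V"
    "\<And>C. finite C \<Longrightarrow> C \<subseteq> V \<Longrightarrow> C \<inter> W0 = {} \<Longrightarrow>
       cap_fin c B + cap_fin c C - 2 * sqrt (\<eta> * (cap_fin c C + \<eta>)) - \<eta> \<le> cap_fin c (B \<union> C)"
proof -
  obtain W0 where W0: "finite W0" "W0 \<subseteq> V" "B \<subseteq> W0"
    "\<And>W. W0 \<subseteq> W \<Longrightarrow> cap_within c W B \<le> cap_fin c B + \<eta>"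
    using cap_within_approx[OF assms] by blast
  have far: "cap_fin c B + cap_fin c C - 2 * sqrt (\<eta> * (cap_fin c C + \<eta>)) - \<eta> \<le> cap_fin c (B \<union> C)"
    if C: "finite C" "C \<subseteq> V" "C \<inter> W0 = {}" for C
  proof -
    obtain W1 where W1: "finite W1" "W1 \<subseteq> V" "B \<union> C \<subseteq> W1"
      "\<And>W. W1 \<subseteq> W \<Longrightarrow> cap_within c W (B \<union> C) \<le> cap_fin c (B \<union> C) + \<eta>"
      by (rule cap_within_approx[of "B \<union> C" \<eta>]) (use assms C in auto)
    obtain W2 where W2: "finite W2" "W2 \<subseteq> V" "C \<subseteq> W2"
      "\<And>W. W2 \<subseteq> W \<Longrightarrow> cap_within c W C \<le> cap_fin c C + \<eta>"
      by (rule cap_within_approx[of C \<eta>]) (use assms C in auto)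
    define W where "W = W0 \<union> W1 \<union> W2"
    have W: "finite W" "W \<subseteq> V" "W0 \<subseteq> W" "W1 \<subseteq> W" "W2 \<subseteq> W" "B \<subseteq> W" "C \<subseteq> W"
      using W0 W1 W2 unfolding W_def by auto
    let ?a = "cap_within c W B" and ?b = "cap_within c W C" and ?X = "mutual_energy c W B C"
    have a: "cap_fin c B \<le> ?a"
      using cap_within_antimono[OF W(2), of B] cap_fin_eq_cap_within[OF assms(1)] by simp
    have b: "cap_fin c C \<le> ?b"
      using cap_within_antimono[OF W(2), of C] cap_fin_eq_cap_within[OF C(2)] by simp
    have "cap_within c W0 B - ?a \<le> \<eta>"
      using W0(4)[OF order_refl] a by linarith
    moreover have "?b \<le> cap_fin c C + \<eta>"
      using W2(4)[OF W(5)] .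
    moreover have "0 \<le> ?b"
      using b cap_fin_nonneg[of C] by linarith
    ultimately have "(cap_within c W0 B - ?a) * ?b \<le> \<eta> * (cap_fin c C + \<eta>)"
      using assms(3) by (intro mult_mono) auto
    with mutual_energy_sq_le[OF W(1,3) W0(3) W(7) C(3)]
    have "?X \<le> sqrt (\<eta> * (cap_fin c C + \<eta>))"
      by (intro real_le_rsqrt) linarith
    moreover have "?a + ?b - 2 * ?X \<le> cap_fin c (B \<union> C) + \<eta>"
      using cap_within_union_ge[OF W(1,6,7)] W1(4)[OF W(4)] by linarith
    ultimately show ?thesis
      using a b by linarith
  qed
  show ?thesis
    by (rule that[OF W0(1,2) far])
qed

lemma cap_fin_unbounded_if_disjoint_family:
  assumes "A \<subseteq> V" "\<delta> > 0" "infinite I" "disjoint_family_on F I"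
    and "\<And>i. i \<in> I \<Longrightarrow> finite (F i) \<and> F i \<subseteq> A \<and> \<delta> \<le> cap_fin c (F i)"
  shows "\<exists>G. finite G \<and> G \<subseteq> A \<and> r \<le> cap_fin c G"
proof -
  have "\<exists>G. finite G \<and> G \<subseteq> A \<and> real k * (\<delta> / 4) \<le> cap_fin c G" for k
  proof (induction k)
    case 0
    show ?case by (intro exI[of _ "{}"]) (simp add: cap_fin_def)
  next
    case (Suc k)
    then obtain G where G: "finite G" "G \<subseteq> A" "real k * (\<delta> / 4) \<le> cap_fin c G"
      by blast
    obtain W0 where W0: "finite W0" "W0 \<subseteq> V"
      "\<And>C. finite C \<Longrightarrow> C \<subseteq> V \<Longrightarrow> C \<inter> W0 = {} \<Longrightarrow>
        cap_fin c G + cap_fin c C - 2 * sqrt (\<delta> / 32 * (cap_fin c C + \<delta> / 32)) - \<delta> / 32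
          \<le> cap_fin c (G \<union> C)"
      by (rule cap_fin_union_far[of G "\<delta> / 32"]) (use G assms(1,2) in auto)
    obtain i where i: "i \<in> I" "F i \<inter> W0 = {}"
      by (rule disjoint_family_on_avoids_finite[OF W0(1) assms(3,4)])
    have Fi: "finite (F i)" "F i \<subseteq> A" "\<delta> \<le> cap_fin c (F i)"
      using assms(5)[OF i(1)] by auto
    have "cap_fin c G + cap_fin c (F i) - 2 * sqrt (\<delta> / 32 * (cap_fin c (F i) + \<delta> / 32)) - \<delta> / 32
        \<le> cap_fin c (G \<union> F i)"
      using Fi assms(1) i(2) by (intro W0(3)) auto
    moreover have "\<delta> / 4 \<le> cap_fin c (F i) - 2 * sqrt (\<delta> / 32 * (cap_fin c (F i) + \<delta> / 32)) - \<delta> / 32"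
      using assms(2) Fi(3) by (rule sub_sqrt_error_ge_quarter)
    moreover have "real (Suc k) * (\<delta> / 4) = real k * (\<delta> / 4) + \<delta> / 4"
      by (simp add: distrib_right)
    ultimately have "real (Suc k) * (\<delta> / 4) \<le> cap_fin c (G \<union> F i)"
      using G(3) by linarith
    with G Fi show ?case
      by (intro exI[of _ "G \<union> F i"]) auto
  qed
  moreover obtain k :: nat where "r < real k * (\<delta> / 4)"
    using reals_Archimedean3[of "\<delta> / 4"] assms(2) by auto
  ultimately show ?thesis
    by (meson less_eq_real_def order_trans)
qed

lemma Cap_eq_infinity_if_unbounded:
  assumes "\<And>r. \<exists>F. finite F \<and> F \<subseteq> A \<and> r \<le> cap_fin c F"
  shows "Cap c A = \<infinity>"
proof -
  have "infinite A"
  proof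
    assume "finite A"
    obtain F where F: "finite F" "F \<subseteq> A" "(\<Sum>v\<in>A. cond c v) + 1 \<le> cap_fin c F"
      using assms by blast
    have "cap_fin c F \<le> (\<Sum>v\<in>A. cond c v)"
      using cap_fin_le_sum_cond[of F] sum_mono2[OF \<open>finite A\<close> F(2), of "cond c"] cond_nonneg by simp
    with F(3) show False by simp
  qed
  have "ereal r \<le> (SUP F\<in>{F. F \<subseteq> A \<and> finite F}. ereal (cap_fin c F))" for r
  proof -
    obtain F where "finite F" "F \<subseteq> A" "r \<le> cap_fin c F"
      using assms by blast
    then show ?thesis
      by (intro SUP_upper2[of F]) auto
  qed
  with \<open>infinite A\<close> show ?thesis
    unfolding Cap_def by (simp add: ereal_top)
qed


lemma Cap_eq_infinity_if_disjoint_family: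
  assumes "A \<subseteq> V" "\<epsilon> > 0" "infinite I" "disjoint_family_on As I"
    and "\<And>i. i \<in> I \<Longrightarrow> As i \<subseteq> A" "\<And>i. i \<in> I \<Longrightarrow> ereal \<epsilon> \<le> Cap c (As i)"
  shows "Cap c A = \<infinity>"
proof -
  have "\<exists>F. finite F \<and> F \<subseteq> As i \<and> \<epsilon> / 2 < cap_fin c F" if "i \<in> I" for i
  proof -
    have "ereal (\<epsilon> / 2) < ereal \<epsilon>"
      using assms(2) by simp
    also have "\<dots> \<le> Cap c (As i)"
      using assms(6)[OF that] .
    finally obtain F where "finite F" "F \<subseteq> As i" "\<epsilon> / 2 < cap_fin c F"
      by (rule Cap_gt_imp_finite_subset)
    then show ?thesis by blast
  qed
  then have "\<forall>i\<in>I. \<exists>F. finite F \<and> F \<subseteq> As i \<and> \<epsilon> / 2 < cap_fin c F"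
    by blast
  from bchoice[OF this] obtain F
    where F: "\<forall>i\<in>I. finite (F i) \<and> F i \<subseteq> As i \<and> \<epsilon> / 2 < cap_fin c (F i)"
    by blast
  have "disjoint_family_on F I"
  proof (rule disjoint_family_on_bisimulation[OF assms(4)])
    fix n m
    assume "n \<in> I" "m \<in> I" "As n \<inter> As m = {}"
    moreover have "F n \<subseteq> As n" "F m \<subseteq> As m"
      using F \<open>n \<in> I\<close> \<open>m \<in> I\<close> by auto
    ultimately show "F n \<inter> F m = {}"
      by blast
  qed
  show ?thesis
  proof (rule Cap_eq_infinity_if_unbounded)
    show "\<exists>G. finite G \<and> G \<subseteq> A \<and> r \<le> cap_fin c G" for r
    proof (rule cap_fin_unbounded_if_disjoint_family[OF assms(1) _ assms(3) \<open>disjoint_family_on F I\<close>])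
      show "\<epsilon> / 2 > 0"
        using assms(2) by simp
      show "finite (F i) \<and> F i \<subseteq> A \<and> \<epsilon> / 2 \<le> cap_fin c (F i)" if "i \<in> I" for i
        using bspec[OF F that] assms(5)[OF that] by auto
    qed
  qed
qed

end

theorem lemma2p13:
  fixes V :: "'v set" and c :: "'v \<Rightarrow> 'v \<Rightarrow> real" and A :: "'v set"
    and As :: "nat \<Rightarrow> 'v set" and \<epsilon> :: real
  assumes "network V c" and "transient V c"
    and "A \<subseteq> V"
    and "\<epsilon> > 0"
    and "disjoint_family_on As {1..}"
    and "\<And>i. i \<ge> 1 \<Longrightarrow> As i \<subseteq> A"
    and "\<And>i. i \<ge> 1 \<Longrightarrow> Cap c (As i) \<ge> ereal \<epsilon>"
  shows "Cap c A = \<infinity>"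
proof -
  interpret walk_network V c
    using assms(1) transient_nbrs_nonempty[OF assms(2)] by unfold_locales
  show ?thesis
    by (rule Cap_eq_infinity_if_disjoint_family[OF assms(3,4) infinite_Ici assms(5)])
      (use assms(6,7) in auto)
qed

end
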